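(* Every star gallery is normal.
   Context: An art gallery $\Gamma$ is a simple polygon in the plane (closed region: boundary together with interior), whose boundary (the walls) consists of finitely many line segments. A guard is a point of $\Gamma$; a guard $G$ visually covers $A\in\Gamma$ if the segment $GA$ lies entirely in $\Gamma$. A configuration of guards is a set $F$ of points of $\Gamma$; it visually covers $X\subseteq\Gamma$ if each point of $X$ is visually covered by some guard in $F$. $\Gamma$ is normal if every configuration of guards visually covering the walls visually covers all of $\Gamma$. $\Gamma$ is a star gallery if there is a point $P\in\Gamma$ such that for every $X\in\Gamma$ the segment $PX$ lies in $\Gamma$. *)

theory Defs
  imports "HOL-Analysis.Analysis"
begin

definition edge :: "complex list \<Rightarrow> nat \<Rightarrow> complex set" where
  "edge vs i = closed_segment (vs ! i) (vs ! ((i + 1) mod length vs))"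

definition simple_polygon :: "complex list \<Rightarrow> bool" where
  "simple_polygon vs \<longleftrightarrow>
     length vs \<ge> 3 \<and> distinct vs \<and>
     (\<forall>i < length vs. \<forall>j < length vs. i \<noteq> j \<longrightarrow>
        (if j = (i + 1) mod length vs then edge vs i \<inter> edge vs j = {vs ! j}
         else if i = (j + 1) mod length vs then edge vs i \<inter> edge vs j = {vs ! i}
         else edge vs i \<inter> edge vs j = {}))"

definition walls :: "complex list \<Rightarrow> complex set" where
  "walls vs = (\<Union>i < length vs. edge vs i)"

definition gallery :: "complex list \<Rightarrow> complex set" where
  "gallery vs = walls vs \<union> inside (walls vs)"

definition visually_covers :: "complex set \<Rightarrow> complex set \<Rightarrow> complex set \<Rightarrow> bool" where
  "visually_covers \<Gamma> F X \<longleftrightarrow> (\<forall>A \<in> X. \<exists>G \<in> F. closed_segment G A \<subseteq> \<Gamma>)"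

definition normal_gallery :: "complex list \<Rightarrow> bool" where
  "normal_gallery vs \<longleftrightarrow>
     (\<forall>F. F \<subseteq> gallery vs \<longrightarrow> visually_covers (gallery vs) F (walls vs)
            \<longrightarrow> visually_covers (gallery vs) F (gallery vs))"

definition star_gallery :: "complex list \<Rightarrow> bool" where
  "star_gallery vs \<longleftrightarrow>
     (\<exists>P \<in> gallery vs. \<forall>X \<in> gallery vs. closed_segment P X \<subseteq> gallery vs)"

end

theory Submission imports Defs begin

(* Write S for the walls and \<Gamma> = S \<union> inside S for the gallery; S is compact, so \<Gamma> is
   bounded and its frontier lies in S.  Let P be a star centre, F a configuration seeing
   every wall point, and A \<in> \<Gamma>.
   (1) Following the ray from P through A until it leaves the bounded set \<Gamma> gives a
       frontier point W of \<Gamma> (hence a wall point) with A on the segment PW.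
   (2) Some guard G \<in> F sees W.  The three sides of the triangle PGW lie in \<Gamma>: PG and PW
       because P is a star centre, GW because G sees W.
   (3) A region of the form S \<union> inside S containing the frontier of a bounded set contains
       the whole set (otherwise an unbounded component of -S would be trapped inside it).
       For a triangle in the plane the frontier is the union of its sides, so the whole
       triangle PGW lies in \<Gamma>; since A \<in> PW, the segment GA lies in it, i.e. G sees A. *)

lemma ray_exits_through_frontier:
  fixes P A :: "'a::euclidean_space"
  assumes bK: "bounded K" and AK: "A \<in> K"
  shows "\<exists>W \<in> frontier K. A \<in> closed_segment P W"
proof (cases "A = P")
  case True
  have "frontier K \<noteq> {}"
    using frontier_not_empty AK bK not_bounded_UNIV by blast
  then show ?thesis using True by auto
next
  case False
  then have nAP: "norm (A - P) > 0" by simp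
  obtain r where r: "r > 0" "K \<subseteq> ball A r"
    using bounded_subset_ballD[OF bK] by blast
  define c where "c = r / norm (A - P)"
  define Q where "Q = A + c *\<^sub>R (A - P)"
  have "dist A Q = r"
    using nAP r(1) by (simp add: Q_def c_def dist_norm)
  then have QK: "Q \<notin> K" using r(2) by auto
  have c0: "c > 0" using nAP r(1) by (simp add: c_def)
  have "A = (1 - 1 / (1 + c)) *\<^sub>R P + (1 / (1 + c)) *\<^sub>R Q"
    using c0 by (simp add: Q_def field_simps scaleR_add_right flip: scaleR_add_left)
  then have "A \<in> closed_segment P Q"
    using c0 unfolding in_segment by (intro conjI exI[of _ "1 / (1 + c)"]) auto
  then have AQ: "between (Q, P) A"
    by (simp add: between_mem_segment closed_segment_commute)
  have "closed_segment A Q \<inter> frontier K \<noteq> {}"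
    using AK QK by (intro connected_Int_frontier) auto
  then obtain W where WK: "W \<in> frontier K" and "between (A, Q) W"
    by (auto simp: between_mem_segment)
  then have "between (P, W) A"
    using between_trans_2[OF AQ] by blast
  then show ?thesis using WK by (auto simp: between_mem_segment)
qed

lemma frontier_filled_subset:
  fixes S :: "'a::real_normed_vector set"
  assumes "closed S"
  shows "frontier (S \<union> inside S) \<subseteq> S"
  using frontier_Un_subset[of S "inside S"] frontier_subset_closed[OF assms]
    frontier_inside_subset[OF assms] by blast

text \<open>If the frontier of a bounded set K lies in S \<union> inside S then so does K: a point of K
  in the outside of S would lie in an unbounded connected component of -S, which avoids
  the frontier of K and therefore stays inside the bounded set K.\<close>

lemma bounded_in_filled_if_frontier:
  fixes S K :: "'a::real_normed_vector set"
  assumes bK: "bounded K" and frK: "frontier K \<subseteq> S \<union> inside S"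
  shows "K \<subseteq> S \<union> inside S"
proof
  fix x assume xK: "x \<in> K"
  show "x \<in> S \<union> inside S"
  proof (rule ccontr)
    assume x_out: "x \<notin> S \<union> inside S"
    then have xo: "x \<in> outside S" by (simp add: union_with_inside)
    define C where "C = connected_component_set (- S) x"
    have C_outside: "C \<subseteq> outside S"
      using outside_same_component[OF _ xo] by (auto simp: C_def)
    have "x \<in> C"
      using x_out by (simp add: C_def)
    moreover have "C \<inter> frontier K = {}"
      using frK C_outside by (auto simp: union_with_inside)
    moreover have "connected C" by (simp add: C_def)
    ultimately have "C \<subseteq> K"
      using connected_Int_frontier[of C K] xK by blast
    then have "bounded C" using bK bounded_subset by blast
    then show False using xo by (simp add: outside C_def)
  qed
qed

text \<open>In the plane, a triangle whose three sides lie in S \<union> inside S lies there entirely,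
  because its frontier is the union of its sides.\<close>

lemma triangle_in_filled:
  fixes a b c :: complex
  assumes "closed_segment a b \<subseteq> S \<union> inside S" "closed_segment b c \<subseteq> S \<union> inside S"
    and "closed_segment c a \<subseteq> S \<union> inside S"
  shows "convex hull {a, b, c} \<subseteq> S \<union> inside S"
proof (rule bounded_in_filled_if_frontier)
  show "bounded (convex hull {a, b, c})"
    by (simp add: finite_imp_bounded_convex_hull)
  show "frontier (convex hull {a, b, c}) \<subseteq> S \<union> inside S"
    using assms by (simp add: frontier_of_triangle)
qed

lemma star_filled_region_normal:
  fixes S :: "complex set"
  assumes cS: "compact S"
    and star: "\<And>X. X \<in> S \<union> inside S \<Longrightarrow> closed_segment P X \<subseteq> S \<union> inside S"
    and cov: "visually_covers (S \<union> inside S) F S"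
  shows "visually_covers (S \<union> inside S) F (S \<union> inside S)"
  unfolding visually_covers_def
proof
  let ?\<Gamma> = "S \<union> inside S"
  fix A assume A\<Gamma>: "A \<in> ?\<Gamma>"
  have "bounded ?\<Gamma>"
    using cS by (simp add: compact_imp_bounded bounded_inside)
  then obtain W where W\<Gamma>: "W \<in> frontier ?\<Gamma>" and AW: "A \<in> closed_segment P W"
    using ray_exits_through_frontier A\<Gamma> by blast
  have WS: "W \<in> S"
    using W\<Gamma> frontier_filled_subset[OF compact_imp_closed[OF cS]] by blast
  then obtain G where GF: "G \<in> F" and GW: "closed_segment G W \<subseteq> ?\<Gamma>"
    using cov unfolding visually_covers_def by blast
  have "G \<in> ?\<Gamma>" using GW by auto
  then have "convex hull {P, G, W} \<subseteq> ?\<Gamma>"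
    using star[of G] star[of W] WS GW
    by (intro triangle_in_filled) (auto simp: closed_segment_commute)
  moreover have "closed_segment G A \<subseteq> convex hull {P, G, W}"
  proof (rule closed_segment_subset)
    have "closed_segment P W \<subseteq> convex hull {P, G, W}"
      by (rule closed_segment_subset) (auto simp: hull_inc)
    then show "A \<in> convex hull {P, G, W}" using AW by blast
  qed (simp_all add: hull_inc convex_convex_hull)
  ultimately show "\<exists>G \<in> F. closed_segment G A \<subseteq> ?\<Gamma>"
    using GF by blast
qed

lemma compact_walls: "compact (walls vs)"
  unfolding walls_def edge_def by (intro compact_UN) auto

theorem theorem2:
  fixes vs :: "complex list"
  assumes "simple_polygon vs"
    and "star_gallery vs"
  shows "normal_gallery vs"
proof -
  obtain P where star: "\<And>X. X \<in> gallery vs \<Longrightarrow> closed_segment P X \<subseteq> gallery vs"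
    using assms(2) unfolding star_gallery_def by blast
  then have "\<And>F. visually_covers (gallery vs) F (walls vs)
                 \<Longrightarrow> visually_covers (gallery vs) F (gallery vs)"
    unfolding gallery_def by (rule star_filled_region_normal[OF compact_walls])
  then show ?thesis
    unfolding normal_gallery_def by blast
qed

end
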